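(* Let $h\in\bar K[z]$ be nonzero and let $h=q^2+\rho$ be a part-square decomposition with $t_{q,\rho}<2v(2)$. Then: (a) the decomposition is good if and only if some (equivalently, any) normalized reduction of $\rho$ is not the square of a polynomial in $k[z]$; (b) if the decomposition $h=q^2+\rho$ is good and $h=\tilde q^2+\tilde\rho$ is another good part-square decomposition, then for any normalized reductions of $\rho$ and $\tilde\rho$, the sets of odd degrees of monomials appearing in them coincide, and their derivatives are equal up to a nonzero scalar in $k$.
   Context: $K$ is a field of characteristic $0$, complete with respect to a discrete valuation $v$ (values in $\mathbb{Q}\cup\{+\infty\}$), with algebraically closed residue field $k$ of characteristic $2$; $v$ extends to a fixed algebraic closure $\bar K$. For nonzero $h(z)=\sum_i H_iz^i\in\bar K[z]$, $v(h)=\min_i v(H_i)$ (Gauss valuation). A normalized reduction of a nonzero $h$ is the image in $k[z]$ of $\gamma^{-1}h$ for some $\gamma\in\bar K^\times$ with $v(\gamma)=v(h)$ (unique up to a nonzero scalar). A part-square decomposition of $h$ is an expression $h=q^2+\rho$ with $q,\rho\in\bar K[z]$ and $\deg q\le\lceil\deg(h)/2\rceil$; set $t_{q,\rho}=v(\rho)-v(h)$. The decomposition is good if either $t_{q,\rho}\ge 2v(2)$, or $t_{q,\rho}<2v(2)$ and there is no part-square decomposition $h=\tilde q^2+\tilde\rho$ with $t_{\tilde q,\tilde\rho}>t_{q,\rho}$. *)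

theory Defs
  imports "HOL-Computational_Algebra.Polynomial" "HOL-Library.Extended_Real"
begin

text \<open>The type 'a plays the role of the algebraic closure of K, with the
extended valuation v (values in Q united with +infinity, encoded in ereal). The type 'k is the residue field k, and red is the
reduction map from the valuation ring of 'a onto k.\<close>

definition alg_closed_type :: "'b::field itself \<Rightarrow> bool" where
  "alg_closed_type _ \<longleftrightarrow> (\<forall>p::'b poly. degree p \<ge> 1 \<longrightarrow> (\<exists>x. poly p x = 0))"

definition is_valuation :: "('a::field \<Rightarrow> ereal) \<Rightarrow> bool" where
  "is_valuation v \<longleftrightarrow>
     (\<forall>x. v x = \<infinity> \<longleftrightarrow> x = 0) \<and>
     (\<forall>x. x \<noteq> 0 \<longrightarrow> (\<exists>r::rat. v x = ereal (real_of_rat r))) \<and>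
     (\<forall>x y. v (x * y) = v x + v y) \<and>
     (\<forall>x y. v (x + y) \<ge> min (v x) (v y))"

definition is_subfield :: "'a::field set \<Rightarrow> bool" where
  "is_subfield K \<longleftrightarrow> 0 \<in> K \<and> 1 \<in> K \<and>
     (\<forall>x\<in>K. \<forall>y\<in>K. x + y \<in> K \<and> x - y \<in> K \<and> x * y \<in> K) \<and>
     (\<forall>x\<in>K. inverse x \<in> K)"

definition algebraic_over :: "'a::field set \<Rightarrow> 'a \<Rightarrow> bool" where
  "algebraic_over K x \<longleftrightarrow> (\<exists>p. p \<noteq> 0 \<and> (\<forall>i. coeff p i \<in> K) \<and> poly p x = 0)"

definition discrete_on :: "('a::field \<Rightarrow> ereal) \<Rightarrow> 'a set \<Rightarrow> bool" where
  "discrete_on v K \<longleftrightarrow> (\<exists>c::rat. c > 0 \<and>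
      v ` (K - {0}) = {ereal (real_of_rat (of_int n * c)) | n. True})"

definition complete_on :: "('a::field \<Rightarrow> ereal) \<Rightarrow> 'a set \<Rightarrow> bool" where
  "complete_on v K \<longleftrightarrow> (\<forall>x::nat \<Rightarrow> 'a. (\<forall>n. x n \<in> K) \<longrightarrow>
      (\<forall>M::real. \<exists>N. \<forall>m\<ge>N. \<forall>n\<ge>N. v (x m - x n) \<ge> ereal M) \<longrightarrow>
      (\<exists>L\<in>K. \<forall>M::real. \<exists>N. \<forall>n\<ge>N. v (x n - L) \<ge> ereal M))"

definition is_reduction :: "('a::field \<Rightarrow> ereal) \<Rightarrow> ('a \<Rightarrow> 'k::field) \<Rightarrow> bool" where
  "is_reduction v red \<longleftrightarrow>
     (\<forall>x y. v x \<ge> 0 \<longrightarrow> v y \<ge> 0 \<longrightarrow> red (x + y) = red x + red y \<and> red (x * y) = red x * red y) \<and>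
     red 1 = 1 \<and>
     (\<forall>x. v x \<ge> 0 \<longrightarrow> (red x = 0 \<longleftrightarrow> v x > 0)) \<and>
     (\<forall>c. \<exists>x. v x \<ge> 0 \<and> red x = c)"

definition setting :: "'a::field_char_0 set \<Rightarrow> ('a \<Rightarrow> ereal) \<Rightarrow> ('a \<Rightarrow> 'k::field) \<Rightarrow> bool" where
  "setting K v red \<longleftrightarrow>
     alg_closed_type TYPE('a) \<and> alg_closed_type TYPE('k) \<and> (2::'k) = 0 \<and>
     is_subfield K \<and> (\<forall>x. algebraic_over K x) \<and>
     is_valuation v \<and> discrete_on v K \<and> complete_on v K \<and>
     is_reduction v red \<and> (\<forall>c. \<exists>x\<in>K. v x \<ge> 0 \<and> red x = c)"

definition gauss_val :: "('a::field \<Rightarrow> ereal) \<Rightarrow> 'a poly \<Rightarrow> ereal" where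
  "gauss_val v h = Min ((\<lambda>i. v (coeff h i)) ` {..degree h})"

definition normalized_reduction ::
  "('a::field \<Rightarrow> ereal) \<Rightarrow> ('a \<Rightarrow> 'k::field) \<Rightarrow> 'a poly \<Rightarrow> 'k poly \<Rightarrow> bool" where
  "normalized_reduction v red h hb \<longleftrightarrow> h \<noteq> 0 \<and>
     (\<exists>\<gamma>. \<gamma> \<noteq> 0 \<and> v \<gamma> = gauss_val v h \<and> hb = map_poly red (smult (inverse \<gamma>) h))"

definition part_square_decomp :: "'a::field poly \<Rightarrow> 'a poly \<Rightarrow> 'a poly \<Rightarrow> bool" where
  "part_square_decomp h q \<rho> \<longleftrightarrow> h = q ^ 2 + \<rho> \<and> degree q \<le> (degree h + 1) div 2"

definition tval :: "('a::field \<Rightarrow> ereal) \<Rightarrow> 'a poly \<Rightarrow> 'a poly \<Rightarrow> ereal" where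
  "tval v h \<rho> = gauss_val v \<rho> - gauss_val v h"

definition good_decomp :: "('a::field \<Rightarrow> ereal) \<Rightarrow> 'a poly \<Rightarrow> 'a poly \<Rightarrow> 'a poly \<Rightarrow> bool" where
  "good_decomp v h q \<rho> \<longleftrightarrow> part_square_decomp h q \<rho> \<and>
     (tval v h \<rho> \<ge> 2 * v 2 \<or>
      (tval v h \<rho> < 2 * v 2 \<and>
       \<not> (\<exists>q' \<rho>'. part_square_decomp h q' \<rho>' \<and> tval v h \<rho>' > tval v h \<rho>)))"

definition is_square_poly :: "'k::comm_semiring_1 poly \<Rightarrow> bool" where
  "is_square_poly r \<longleftrightarrow> (\<exists>s. r = s ^ 2)"

definition odd_degrees :: "'k::zero poly \<Rightarrow> nat set" where
  "odd_degrees r = {i. odd i \<and> coeff r i \<noteq> 0}"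

end

theory Submission
  imports Defs
begin

text \<open>Scale so that \<open>\<rho>\<close> has Gauss valuation 0: with \<open>v \<gamma> = v(\<rho>)\<close> and \<open>\<beta>\<^sup>2 = \<gamma>\<close>, put
\<open>Q = q/\<beta>\<close> and \<open>P = \<rho>/\<gamma>\<close>, so that \<open>h/\<gamma> = Q\<^sup>2 + P\<close>. The hypothesis \<open>t < 2v(2)\<close> forces
\<open>v(2Q) > 0\<close>. For any competing decomposition \<open>h/\<gamma> = (Q + D)\<^sup>2 + P'\<close> with \<open>v(P') \<ge> 0\<close>
this makes \<open>D\<close> integral and the cross term \<open>2QD\<close> vanish in the residue field, so the
reduction of \<open>P\<close> equals that of \<open>P'\<close> plus the square of that of \<open>D\<close>. Hence \<open>v(\<rho>)\<close> can be
increased iff the reduction of \<open>P\<close> is a square (conversely, lift a square root \<open>s\<close> to \<open>S\<close>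
and replace \<open>q\<close> by \<open>q + \<beta>S\<close>). Two good decompositions have the same \<open>v(\<rho>)\<close>, so
their normalized reductions differ, up to a unit, by a square; in characteristic 2
a square has no odd-degree monomials and zero derivative.\<close>

lemma smult_two: "smult 2 p = p + (p :: 'a::comm_semiring_1 poly)"
  using smult_add_left[of 1 1 p] by simp

lemma ereal_less_add_pos: "0 < x \<Longrightarrow> ereal m < ereal m + x"
  by (cases x) auto

lemma smult_inverse_square:
  fixes \<beta> \<gamma> :: "'a::field"
  assumes "\<beta> * \<beta> = \<gamma>"
  shows "smult (inverse \<gamma>) (q\<^sup>2) = (smult (inverse \<beta>) q)\<^sup>2"
  using assms by (auto simp: power2_eq_square)

lemma alg_closed_type_sqrt:
  assumes "alg_closed_type TYPE('a::field)" shows "\<exists>y::'a. y * y = x"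
proof -
  have "degree [:- x, 0, 1::'a:] \<ge> 1" by simp
  then obtain y where "poly [:- x, 0, 1:] y = 0"
    using assms unfolding alg_closed_type_def by blast
  then have "y * y = x" by (simp add: algebra_simps)
  then show ?thesis by blast
qed

section \<open>Squares in characteristic 2\<close>

lemma of_nat_odd_char_2:
  assumes "(2::'k::comm_ring_1) = 0" "odd n" shows "(of_nat n :: 'k) = 1"
proof -
  obtain k where "n = 2 * k + 1" using \<open>odd n\<close> by (rule oddE)
  then show ?thesis using assms(1) by simp
qed

lemma pderiv_square_char_2:
  assumes "(2::'k::idom) = 0" shows "pderiv (p\<^sup>2) = (0 :: 'k poly)"
  using pderiv_power_Suc[of p 1] assms by (simp add: numeral_2_eq_2[symmetric])

lemma coeff_square_odd_char_2:
  assumes "(2::'k::idom) = 0" "odd i" shows "coeff (p\<^sup>2) i = (0 :: 'k)"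
proof -
  have "coeff (pderiv (p\<^sup>2)) (i - 1) = of_nat i * coeff (p\<^sup>2) i"
    using \<open>odd i\<close> by (simp add: coeff_pderiv)
  then show ?thesis using pderiv_square_char_2[OF assms(1)] of_nat_odd_char_2[OF assms] by simp
qed

lemma odd_degrees_add_square_char_2:
  assumes "(2::'k::idom) = 0" shows "odd_degrees (a + p\<^sup>2) = odd_degrees (a :: 'k poly)"
  using coeff_square_odd_char_2[OF assms] unfolding odd_degrees_def by auto

lemma pderiv_add_square_char_2:
  assumes "(2::'k::idom) = 0" shows "pderiv (a + p\<^sup>2) = pderiv (a :: 'k poly)"
  using pderiv_square_char_2[OF assms] by (simp add: pderiv_add)

lemma odd_degrees_smult:
  "c \<noteq> 0 \<Longrightarrow> odd_degrees (smult c a) = odd_degrees (a :: 'k::idom poly)"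
  unfolding odd_degrees_def by simp

section \<open>The Gauss valuation\<close>

locale valued_field =
  fixes v :: "'a::field \<Rightarrow> ereal"
  assumes is_valuation: "is_valuation v"
begin

lemma v_eq_infinity_iff: "v x = \<infinity> \<longleftrightarrow> x = 0"
  using is_valuation unfolding is_valuation_def by blast

lemma v_zero [simp]: "v 0 = \<infinity>"
  by (simp add: v_eq_infinity_iff)

lemma v_finite: "x \<noteq> 0 \<Longrightarrow> \<exists>r. v x = ereal r"
  using is_valuation unfolding is_valuation_def by blast

lemma v_mult: "v (x * y) = v x + v y"
  using is_valuation unfolding is_valuation_def by blast

lemma v_mult_nonneg: "0 \<le> v x \<Longrightarrow> 0 \<le> v y \<Longrightarrow> 0 \<le> v (x * y)"
  by (simp add: v_mult)

lemma v_add: "min (v x) (v y) \<le> v (x + y)"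
  using is_valuation unfolding is_valuation_def by blast

lemma v_one [simp]: "v 1 = 0"
proof -
  obtain r where "v 1 = ereal r" using v_finite[of 1] by auto
  moreover have "v 1 = v 1 + v 1" using v_mult[of 1 1] by simp
  ultimately show ?thesis by simp
qed

lemma v_minus [simp]: "v (- x) = v x"
proof -
  obtain r where r: "v (-1) = ereal r" using v_finite[of "-1"] by auto
  have "v 1 = v (-1) + v (-1)" using v_mult[of "-1" "-1"] by simp
  then have "v (-1) = 0" using r by simp
  then show ?thesis using v_mult[of "-1" x] by simp
qed

lemma v_inverse: assumes "x \<noteq> 0" shows "v (inverse x) = - v x"
proof -
  obtain r where "v x = ereal r" using v_finite assms by blast
  moreover obtain s where "v (inverse x) = ereal s" using v_finite[of "inverse x"] assms by auto
  moreover have "v x + v (inverse x) = 0" using v_mult[of x "inverse x"] assms by simp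
  ultimately show ?thesis by simp
qed

lemma v_add_ge: assumes "c \<le> v x" "c \<le> v y" shows "c \<le> v (x + y)"
proof -
  have "c \<le> min (v x) (v y)" using assms by simp
  then show ?thesis using v_add[of x y] by (rule order_trans)
qed

lemma v_add_gt: assumes "c < v x" "c < v y" shows "c < v (x + y)"
proof -
  have "c < min (v x) (v y)" using assms by simp
  then show ?thesis using v_add[of x y] by (rule less_le_trans)
qed

lemma v_sum_ge: "finite A \<Longrightarrow> (\<And>x. x \<in> A \<Longrightarrow> c \<le> v (f x)) \<Longrightarrow> c \<le> v (sum f A)"
proof (induction A rule: finite_induct)
  case (insert x F)
  have "c \<le> v (f x)" "c \<le> v (sum f F)" using insert by simp_all
  then show ?case using insert(1,2) by (simp add: v_add_ge)
qed simp

lemma v_add_eq_left: assumes "v x < v y" shows "v (x + y) = v x"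
proof (rule antisym)
  have "min (v (x + y)) (v y) \<le> v x" using v_add[of "x + y" "- y"] by simp
  then show "v (x + y) \<le> v x" using assms by (auto simp: min_def split: if_splits)
qed (use v_add[of x y] assms in simp)

lemma gauss_val_ge_iff: "c \<le> gauss_val v p \<longleftrightarrow> (\<forall>i. c \<le> v (coeff p i))"
proof -
  have "c \<le> gauss_val v p \<longleftrightarrow> (\<forall>i\<le>degree p. c \<le> v (coeff p i))"
    unfolding gauss_val_def by (subst Min_ge_iff) auto
  also have "\<dots> \<longleftrightarrow> (\<forall>i. c \<le> v (coeff p i))"
  proof (intro iffI allI)
    fix i assume "\<forall>i\<le>degree p. c \<le> v (coeff p i)"
    then show "c \<le> v (coeff p i)" by (cases "i \<le> degree p") (simp_all add: coeff_eq_0)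
  qed simp
  finally show ?thesis .
qed

lemma gauss_val_gt_iff: "c < gauss_val v p \<longleftrightarrow> (\<forall>i. c < v (coeff p i))"
proof -
  have "c < gauss_val v p \<longleftrightarrow> (\<forall>i\<le>degree p. c < v (coeff p i))"
    unfolding gauss_val_def by (subst Min_gr_iff) auto
  also have "\<dots> \<longleftrightarrow> (\<forall>i. c < v (coeff p i))"
  proof (intro iffI allI)
    fix i assume bound: "\<forall>i\<le>degree p. c < v (coeff p i)"
    show "c < v (coeff p i)"
    proof (cases "i \<le> degree p")
      case False
      have "c < v (coeff p 0)" using bound by simp
      then have "c < \<infinity>" by (rule order.strict_trans2) simp
      then show ?thesis using False by (simp add: coeff_eq_0)
    qed (use bound in simp)
  qed simp
  finally show ?thesis .
qed

lemma gauss_val_le_coeff: "gauss_val v p \<le> v (coeff p i)"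
  using gauss_val_ge_iff[of "gauss_val v p" p] by simp

lemma gauss_val_attained: obtains i where "gauss_val v p = v (coeff p i)"
proof -
  have "gauss_val v p \<in> (\<lambda>i. v (coeff p i)) ` {..degree p}"
    unfolding gauss_val_def by (rule Min_in) auto
  then show ?thesis using that by blast
qed

lemma gauss_val_eq_infinity_iff: "gauss_val v p = \<infinity> \<longleftrightarrow> p = 0"
proof -
  have "gauss_val v p = \<infinity> \<longleftrightarrow> (\<forall>i. v (coeff p i) = \<infinity>)"
    using gauss_val_ge_iff[of \<infinity> p] by simp
  then show ?thesis by (simp add: v_eq_infinity_iff poly_eq_iff)
qed

lemma gauss_val_0 [simp]: "gauss_val v 0 = \<infinity>"
  by (simp add: gauss_val_eq_infinity_iff)

lemma gauss_val_finite: assumes "p \<noteq> 0" obtains m where "gauss_val v p = ereal m"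
proof -
  obtain i where i: "gauss_val v p = v (coeff p i)" by (rule gauss_val_attained)
  moreover have "gauss_val v p \<noteq> \<infinity>" using assms by (simp add: gauss_val_eq_infinity_iff)
  ultimately have "coeff p i \<noteq> 0" by auto
  then obtain m where "v (coeff p i) = ereal m" using v_finite by blast
  then show ?thesis using i that by simp
qed

lemma gauss_val_add_ge: "c \<le> gauss_val v p \<Longrightarrow> c \<le> gauss_val v q \<Longrightarrow> c \<le> gauss_val v (p + q)"
  unfolding gauss_val_ge_iff coeff_add by (blast intro: v_add_ge)

lemma gauss_val_add_gt: "c < gauss_val v p \<Longrightarrow> c < gauss_val v q \<Longrightarrow> c < gauss_val v (p + q)"
  unfolding gauss_val_gt_iff coeff_add by (blast intro: v_add_gt)

lemma gauss_val_minus [simp]: "gauss_val v (- p) = gauss_val v p"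
  unfolding gauss_val_def by simp

lemma gauss_val_diff_ge: "c \<le> gauss_val v p \<Longrightarrow> c \<le> gauss_val v q \<Longrightarrow> c \<le> gauss_val v (p - q)"
  using gauss_val_add_ge[of c p "- q"] by simp

lemma gauss_val_diff_gt: "c < gauss_val v p \<Longrightarrow> c < gauss_val v q \<Longrightarrow> c < gauss_val v (p - q)"
  using gauss_val_add_gt[of c p "- q"] by simp

lemma gauss_val_add_eq_left:
  assumes "gauss_val v p < gauss_val v q" shows "gauss_val v (p + q) = gauss_val v p"
proof (rule antisym)
  obtain i where i: "gauss_val v p = v (coeff p i)" by (rule gauss_val_attained)
  have "v (coeff p i) < v (coeff q i)"
    using assms i gauss_val_le_coeff[of q i] by simp
  then have "v (coeff (p + q) i) = gauss_val v p" using i v_add_eq_left by simp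
  then show "gauss_val v (p + q) \<le> gauss_val v p" by (metis gauss_val_le_coeff)
next
  show "gauss_val v p \<le> gauss_val v (p + q)"
    using assms by (intro gauss_val_add_ge) simp_all
qed

lemma gauss_val_smult: "gauss_val v (smult c p) = v c + gauss_val v p"
proof (rule antisym)
  obtain i where "gauss_val v p = v (coeff p i)" by (rule gauss_val_attained)
  then show "gauss_val v (smult c p) \<le> v c + gauss_val v p"
    using gauss_val_le_coeff[of "smult c p" i] by (simp add: v_mult)
  show "v c + gauss_val v p \<le> gauss_val v (smult c p)"
    unfolding gauss_val_ge_iff by (simp add: v_mult add_left_mono gauss_val_le_coeff)
qed

lemma gauss_val_mult_ge: "gauss_val v p + gauss_val v q \<le> gauss_val v (p * q)"
  unfolding gauss_val_ge_iff coeff_mult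
  by (intro allI v_sum_ge) (simp_all add: v_mult add_mono gauss_val_le_coeff)

lemma gauss_val_mult_nonneg: "0 \<le> gauss_val v p \<Longrightarrow> 0 \<le> gauss_val v q \<Longrightarrow> 0 \<le> gauss_val v (p * q)"
  using gauss_val_mult_ge[of p q] by (metis add_nonneg_nonneg order_trans)

lemma gauss_val_normalize:
  assumes "p \<noteq> 0" "v \<gamma> = gauss_val v p"
  shows "gauss_val v (smult (inverse \<gamma>) p) = 0"
proof -
  obtain m where "gauss_val v p = ereal m" using gauss_val_finite assms(1) by blast
  moreover have "\<gamma> \<noteq> 0" using assms \<open>gauss_val v p = ereal m\<close> by auto
  ultimately show ?thesis using assms(2) by (simp add: gauss_val_smult v_inverse)
qed

lemma gauss_val_smult_inverse_nonneg:
  assumes "\<gamma> \<noteq> 0" "v \<gamma> \<le> gauss_val v p"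
  shows "0 \<le> gauss_val v (smult (inverse \<gamma>) p)"
proof -
  obtain e where "v \<gamma> = ereal e" using v_finite assms(1) by blast
  then show ?thesis using assms by (cases "gauss_val v p") (simp_all add: gauss_val_smult v_inverse)
qed

lemma gauss_val_smult_inverse_pos:
  assumes "\<gamma> \<noteq> 0" "v \<gamma> < gauss_val v p"
  shows "0 < gauss_val v (smult (inverse \<gamma>) p)"
proof -
  obtain e where "v \<gamma> = ereal e" using v_finite assms(1) by blast
  then show ?thesis using assms by (cases "gauss_val v p") (simp_all add: gauss_val_smult v_inverse)
qed

lemma tval_less_imp_nonzero:
  assumes "h \<noteq> 0" "tval v h \<rho> < c" shows "\<rho> \<noteq> 0"
proof
  assume "\<rho> = 0"
  obtain a where "gauss_val v h = ereal a" using gauss_val_finite assms(1) by blast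
  then show False using assms(2) \<open>\<rho> = 0\<close> by (simp add: tval_def)
qed

lemma tval_less_tval_iff:
  assumes "h \<noteq> 0" shows "tval v h x < tval v h y \<longleftrightarrow> gauss_val v x < gauss_val v y"
proof -
  obtain a where "gauss_val v h = ereal a" using gauss_val_finite assms by blast
  then show ?thesis unfolding tval_def
    by (cases "gauss_val v x"; cases "gauss_val v y") auto
qed

end

section \<open>Reduction to the residue field\<close>

locale residue_field = valued_field v for v :: "'a::field \<Rightarrow> ereal" +
  fixes red :: "'a \<Rightarrow> 'k::field"
  assumes is_reduction: "is_reduction v red"
begin

lemma red_add: "0 \<le> v x \<Longrightarrow> 0 \<le> v y \<Longrightarrow> red (x + y) = red x + red y"
  using is_reduction unfolding is_reduction_def by blast

lemma red_mult: "0 \<le> v x \<Longrightarrow> 0 \<le> v y \<Longrightarrow> red (x * y) = red x * red y"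
  using is_reduction unfolding is_reduction_def by blast

lemma red_one [simp]: "red 1 = 1"
  using is_reduction unfolding is_reduction_def by blast

lemma red_eq_0_iff: "0 \<le> v x \<Longrightarrow> red x = 0 \<longleftrightarrow> 0 < v x"
  using is_reduction unfolding is_reduction_def by blast

lemma red_surj: "\<exists>x. 0 \<le> v x \<and> red x = c"
  using is_reduction unfolding is_reduction_def by blast

lemma red_0 [simp]: "red 0 = 0"
  using red_eq_0_iff[of 0] by simp

lemma red_minus: assumes "0 \<le> v x" shows "red (- x) = - red x"
proof -
  have "red (- x) + red x = 0" using red_add[of "- x" x] assms by simp
  then show ?thesis by (simp add: eq_neg_iff_add_eq_0)
qed

lemma red_sum:
  "finite A \<Longrightarrow> (\<And>x. x \<in> A \<Longrightarrow> 0 \<le> v (f x)) \<Longrightarrow> red (sum f A) = (\<Sum>x\<in>A. red (f x))"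
proof (induction A rule: finite_induct)
  case (insert x F)
  then show ?case by (simp add: red_add v_sum_ge)
qed simp

lemma map_poly_red_add:
  assumes "0 \<le> gauss_val v p" "0 \<le> gauss_val v q"
  shows "map_poly red (p + q) = map_poly red p + map_poly red q"
  using assms unfolding poly_eq_iff gauss_val_ge_iff by (simp add: coeff_map_poly red_add)

lemma map_poly_red_minus:
  assumes "0 \<le> gauss_val v p" shows "map_poly red (- p) = - map_poly red p"
  using assms unfolding poly_eq_iff gauss_val_ge_iff by (simp add: coeff_map_poly red_minus)

lemma map_poly_red_diff:
  assumes "0 \<le> gauss_val v p" "0 \<le> gauss_val v q"
  shows "map_poly red (p - q) = map_poly red p - map_poly red q"
  using map_poly_red_add[of p "- q"] map_poly_red_minus[of q] assms by simp

lemma map_poly_red_mult: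
  assumes "0 \<le> gauss_val v p" "0 \<le> gauss_val v q"
  shows "map_poly red (p * q) = map_poly red p * map_poly red q"
proof -
  have "\<And>i. 0 \<le> v (coeff p i)" "\<And>i. 0 \<le> v (coeff q i)"
    using assms gauss_val_ge_iff by auto
  then show ?thesis
    by (simp add: poly_eq_iff coeff_map_poly coeff_mult red_sum red_mult v_mult_nonneg)
qed

lemma map_poly_red_smult:
  assumes "0 \<le> v c" "0 \<le> gauss_val v p"
  shows "map_poly red (smult c p) = smult (red c) (map_poly red p)"
  using assms unfolding poly_eq_iff gauss_val_ge_iff by (simp add: coeff_map_poly red_mult)

lemma map_poly_red_eq_0_iff:
  assumes "0 \<le> gauss_val v p" shows "map_poly red p = 0 \<longleftrightarrow> 0 < gauss_val v p"
  using assms unfolding poly_eq_iff gauss_val_ge_iff gauss_val_gt_iff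
  by (simp add: coeff_map_poly red_eq_0_iff)

lemma map_poly_red_normalize_nonzero:
  assumes "p \<noteq> 0" "v \<gamma> = gauss_val v p"
  shows "map_poly red (smult (inverse \<gamma>) p) \<noteq> 0"
  using map_poly_red_eq_0_iff gauss_val_normalize[OF assms] by simp

lemma lift_poly:
  obtains S where "map_poly red S = s" "0 \<le> gauss_val v S" "degree S \<le> degree s"
proof -
  define lift where "lift c = (if c = 0 then 0 else SOME x. 0 \<le> v x \<and> red x = c)" for c
  have lift: "0 \<le> v (lift c) \<and> red (lift c) = c" for c
    using someI_ex[OF red_surj[of c]] by (simp add: lift_def)
  have "lift 0 = 0" by (simp add: lift_def)
  then have coeff_lift: "coeff (map_poly lift s) i = lift (coeff s i)" for i
    by (simp add: coeff_map_poly)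
  show ?thesis
  proof
    show "map_poly red (map_poly lift s) = s"
      by (simp add: poly_eq_iff coeff_map_poly coeff_lift lift)
    show "0 \<le> gauss_val v (map_poly lift s)"
      by (simp add: gauss_val_ge_iff coeff_lift lift)
    show "degree (map_poly lift s) \<le> degree s"
      by (rule map_poly_degree_leq)
  qed
qed

lemma gauss_val_mult: "gauss_val v (p * q) = gauss_val v p + gauss_val v q"
proof (cases "p = 0 \<or> q = 0")
  case True
  then show ?thesis by (metis gauss_val_0 mult_eq_0_iff plus_ereal.simps(2,3))
next
  case False
  then have "p \<noteq> 0" "q \<noteq> 0" by auto
  obtain i j where i: "gauss_val v p = v (coeff p i)" and j: "gauss_val v q = v (coeff q j)"
    by (metis gauss_val_attained)
  define a b where "a = coeff p i" and "b = coeff q j"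
  have "a \<noteq> 0" "b \<noteq> 0" using i j \<open>p \<noteq> 0\<close> \<open>q \<noteq> 0\<close> a_def b_def
    by (auto simp: gauss_val_eq_infinity_iff)
  \<comment> \<open>Gauss's lemma: the normalized factors have nonzero reductions, and \<open>k[z]\<close> is a domain\<close>
  define P Q where "P = smult (inverse a) p" and "Q = smult (inverse b) q"
  have P: "gauss_val v P = 0" and Q: "gauss_val v Q = 0"
    using gauss_val_normalize \<open>p \<noteq> 0\<close> \<open>q \<noteq> 0\<close> i j by (simp_all add: P_def Q_def a_def b_def)
  have "map_poly red (P * Q) \<noteq> 0"
    using map_poly_red_mult[of P Q] map_poly_red_normalize_nonzero \<open>p \<noteq> 0\<close> \<open>q \<noteq> 0\<close> i j P Q
    by (simp add: P_def Q_def a_def b_def)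
  then have "gauss_val v (P * Q) \<le> 0"
    using map_poly_red_eq_0_iff gauss_val_mult_nonneg[of P Q] P Q by fastforce
  moreover have "p * q = smult (a * b) (P * Q)"
    using \<open>a \<noteq> 0\<close> \<open>b \<noteq> 0\<close> by (simp add: P_def Q_def field_simps)
  ultimately have "gauss_val v (p * q) \<le> v a + v b"
    using add_left_mono[of "gauss_val v (P * Q)" 0 "v a + v b"] by (simp add: gauss_val_smult v_mult)
  then show ?thesis
    using gauss_val_mult_ge[of p q] i j a_def b_def by simp
qed

lemma normalized_reduction_exists:
  assumes "p \<noteq> 0" shows "\<exists>r. normalized_reduction v red p r"
proof -
  obtain i where i: "gauss_val v p = v (coeff p i)" by (rule gauss_val_attained)
  then have "coeff p i \<noteq> 0" using assms by (auto simp: gauss_val_eq_infinity_iff)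
  then show ?thesis using i assms unfolding normalized_reduction_def by metis
qed

lemma normalized_reduction_unique_up_to_unit:
  assumes "normalized_reduction v red p r" "normalized_reduction v red p r'"
  shows "\<exists>c. c \<noteq> 0 \<and> r' = smult c r"
proof -
  obtain \<gamma> \<gamma>' where "\<gamma> \<noteq> 0" "\<gamma>' \<noteq> 0" and \<gamma>: "v \<gamma> = gauss_val v p" and \<gamma>': "v \<gamma>' = gauss_val v p"
    and r: "r = map_poly red (smult (inverse \<gamma>) p)" and r': "r' = map_poly red (smult (inverse \<gamma>') p)"
    using assms unfolding normalized_reduction_def by blast
  define u where "u = \<gamma> * inverse \<gamma>'"
  obtain m where "v \<gamma> = ereal m" using v_finite \<open>\<gamma> \<noteq> 0\<close> by blast
  then have "v u = 0" using \<gamma> \<gamma>' \<open>\<gamma>' \<noteq> 0\<close> by (simp add: u_def v_mult v_inverse)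
  then have "red u \<noteq> 0" using red_eq_0_iff[of u] by simp
  have "p \<noteq> 0" using assms(1) unfolding normalized_reduction_def by blast
  have "r' = map_poly red (smult u (smult (inverse \<gamma>) p))"
    using r' \<open>\<gamma> \<noteq> 0\<close> by (simp add: u_def field_simps)
  also have "\<dots> = smult (red u) r"
    unfolding r using \<open>v u = 0\<close> gauss_val_normalize[OF \<open>p \<noteq> 0\<close> \<gamma>]
    by (intro map_poly_red_smult) simp_all
  finally have "r' = smult (red u) r" .
  then show ?thesis using \<open>red u \<noteq> 0\<close> by blast
qed

lemma square_completion_integral:
  assumes eq: "P = P' + D * D + smult 2 Q * D"
    and P: "0 \<le> gauss_val v P" and P': "0 \<le> gauss_val v P'" and Q: "0 < gauss_val v (smult 2 Q)"
  shows "0 \<le> gauss_val v D"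
proof (rule ccontr)
  assume "\<not> 0 \<le> gauss_val v D"
  then have "D \<noteq> 0" by auto
  then obtain m where m: "gauss_val v D = ereal m" by (rule gauss_val_finite)
  with \<open>\<not> 0 \<le> gauss_val v D\<close> have "m < 0" by simp
  \<comment> \<open>then \<open>D * D\<close> has valuation \<open>2m\<close>, strictly below that of each of the other three terms\<close>
  have "ereal (2 * m) < ereal m" using \<open>m < 0\<close> by simp
  also have "ereal m < gauss_val v (smult 2 Q) + gauss_val v D"
    using ereal_less_add_pos[OF Q, of m] m by (simp add: add.commute)
  also have "\<dots> = gauss_val v (smult 2 Q * D)"
    by (simp only: gauss_val_mult)
  finally have T: "ereal (2 * m) < gauss_val v (smult 2 Q * D)" .
  have "ereal (2 * m) < 0" using \<open>m < 0\<close> by simp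
  then have "ereal (2 * m) < gauss_val v P" "ereal (2 * m) < gauss_val v P'"
    using order.strict_trans2 P P' by blast+
  then have "ereal (2 * m) < gauss_val v (P - P' - smult 2 Q * D)"
    using T by (intro gauss_val_diff_gt)
  also have "P - P' - smult 2 Q * D = D * D"
    unfolding eq by simp
  also have "gauss_val v (D * D) = ereal (2 * m)"
    using m by (simp only: gauss_val_mult) simp
  finally show False by simp
qed

lemma reduction_square_completion:
  assumes eq: "Q\<^sup>2 + P = Q'\<^sup>2 + P'"
    and P: "0 \<le> gauss_val v P" and P': "0 \<le> gauss_val v P'" and Q: "0 < gauss_val v (smult 2 Q)"
  shows "map_poly red P = map_poly red P' + (map_poly red (Q' - Q))\<^sup>2"
proof -
  define D where "D = Q' - Q"
  have "P = Q'\<^sup>2 + P' - Q\<^sup>2"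
    using eq by (metis add_diff_cancel_left')
  also have "\<dots> = (Q + D)\<^sup>2 + P' - Q\<^sup>2"
    by (simp add: D_def)
  also have "\<dots> = P' + D * D + smult 2 Q * D"
    by (simp add: smult_two power2_eq_square algebra_simps)
  finally have P_eq: "P = P' + D * D + smult 2 Q * D" .
  have D: "0 \<le> gauss_val v D" using square_completion_integral[OF P_eq P P' Q] .
  have DD: "0 \<le> gauss_val v (D * D)" using gauss_val_mult_nonneg[OF D D] .
  have cross: "0 < gauss_val v (smult 2 Q * D)"
    using Q D by (simp only: gauss_val_mult add_pos_nonneg)
  then have "map_poly red (smult 2 Q * D) = 0" by (simp add: map_poly_red_eq_0_iff)
  then have "map_poly red P = map_poly red (P' + D * D)"
    unfolding P_eq using P' DD cross
    by (subst map_poly_red_add) (simp_all add: gauss_val_add_ge)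
  also have "\<dots> = map_poly red P' + (map_poly red D)\<^sup>2"
    using P' DD D by (simp add: map_poly_red_add map_poly_red_mult power2_eq_square)
  finally show ?thesis by (simp add: D_def)
qed

lemma square_reduction_improvable:
  assumes P: "0 \<le> gauss_val v P" and Q: "0 < gauss_val v (smult 2 Q)" and s: "map_poly red P = s\<^sup>2"
  obtains S where "degree S \<le> degree s" "0 < gauss_val v (Q\<^sup>2 + P - (Q + S)\<^sup>2)"
proof -
  obtain S where S: "map_poly red S = s" "0 \<le> gauss_val v S" and "degree S \<le> degree s"
    by (rule lift_poly)
  have SS: "0 \<le> gauss_val v (S * S)" using gauss_val_mult_nonneg[OF S(2) S(2)] .
  have "map_poly red (P - S * S) = 0"
    using P SS S s by (simp add: map_poly_red_diff map_poly_red_mult power2_eq_square)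
  then have "0 < gauss_val v (P - S * S)"
    using P SS by (simp add: map_poly_red_eq_0_iff gauss_val_diff_ge)
  moreover have "0 < gauss_val v (smult 2 Q * S)"
    using Q S(2) by (simp only: gauss_val_mult add_pos_nonneg)
  ultimately have "0 < gauss_val v (P - S * S - smult 2 Q * S)"
    by (rule gauss_val_diff_gt)
  also have "P - S * S - smult 2 Q * S = Q\<^sup>2 + P - (Q + S)\<^sup>2"
    by (simp add: smult_two power2_eq_square algebra_simps)
  finally show ?thesis using that \<open>degree S \<le> degree s\<close> by blast
qed

end

section \<open>Part-square decompositions\<close>

locale residue_char_2 = residue_field v red for v :: "'a::field \<Rightarrow> ereal" and red :: "'a \<Rightarrow> 'k::field" +
  assumes residue_char_2: "(2::'k) = 0"
begin

lemma v_two_pos: "0 < v 2"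
proof -
  have "0 \<le> v (1 + 1 :: 'a)" by (rule v_add_ge) simp_all
  then have nonneg: "0 \<le> v (2::'a)" by simp
  have "red (2::'a) = 0" using red_add[of 1 1] residue_char_2 by simp
  then show ?thesis using red_eq_0_iff nonneg by blast
qed

lemma gauss_val_double_scaled_pos:
  assumes h: "h = q\<^sup>2 + \<rho>" "h \<noteq> 0" and t: "tval v h \<rho> < 2 * v 2"
    and \<beta>: "v (\<beta> * \<beta>) = gauss_val v \<rho>"
  shows "0 < gauss_val v (smult 2 (smult (inverse \<beta>) q))"
proof (cases "q = 0")
  case False
  have "\<rho> \<noteq> 0" using tval_less_imp_nonzero h(2) t .
  obtain a where a: "gauss_val v h = ereal a" using gauss_val_finite h(2) by blast
  obtain b where b: "gauss_val v \<rho> = ereal b" using gauss_val_finite \<open>\<rho> \<noteq> 0\<close> by blast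
  obtain m where m: "gauss_val v q = ereal m" using gauss_val_finite False by blast
  have "\<beta> \<noteq> 0" using \<beta> b by auto
  then obtain e where e: "v \<beta> = ereal e" using v_finite by blast
  have "2 * e = b" using \<beta> b e by (simp add: v_mult)
  have scaled: "gauss_val v (smult 2 (smult (inverse \<beta>) q)) = v 2 + ereal (m - e)"
    using \<open>\<beta> \<noteq> 0\<close> by (simp add: gauss_val_smult v_mult v_inverse e m add.assoc)
  show ?thesis
  proof (cases "v 2")
    case (real w)
    have "0 < w" using v_two_pos real by simp
    have "b < 2 * w + 2 * m"
    proof (cases "2 * m < b")
      case True
      \<comment> \<open>then \<open>q\<^sup>2\<close> dominates \<open>h\<close>, so the hypothesis on \<open>tval\<close> says exactly this\<close>
      have "gauss_val v (q\<^sup>2) = ereal (2 * m)"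
        using m by (simp add: power2_eq_square gauss_val_mult)
      then have "gauss_val v h = ereal (2 * m)"
        using h(1) True b gauss_val_add_eq_left by simp
      then show ?thesis using t a b real by (simp add: tval_def)
    qed (use \<open>0 < w\<close> in simp)
    then show ?thesis using scaled real \<open>2 * e = b\<close> by simp
  qed (use scaled v_two_pos in simp_all)
qed simp

end

locale part_square_decomposition = residue_char_2 v red
  for v :: "'a::field \<Rightarrow> ereal" and red :: "'a \<Rightarrow> 'k::field" +
  fixes h q \<rho> :: "'a poly"
  assumes decomp: "part_square_decomp h q \<rho>" and h_nonzero: "h \<noteq> 0"
    and tval_less: "tval v h \<rho> < 2 * v 2"
    and square_root_exists: "\<exists>y. y * y = (x::'a)"
begin

lemma h_eq: "h = q\<^sup>2 + \<rho>"
  using decomp unfolding part_square_decomp_def by blast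

lemma rho_nonzero: "\<rho> \<noteq> 0"
  using tval_less_imp_nonzero h_nonzero tval_less .

lemma degree_rho_le: "degree \<rho> \<le> degree h + 1"
proof -
  have "2 * degree q \<le> degree h + 1" using decomp unfolding part_square_decomp_def by linarith
  moreover have "degree \<rho> \<le> max (degree h) (degree (q\<^sup>2))"
    using degree_diff_le_max[of h "q\<^sup>2"] h_eq by simp
  ultimately show ?thesis using degree_power_le[of q 2] by linarith
qed

lemma degree_square_root_le:
  assumes "map_poly red (smult c \<rho>) = s\<^sup>2" shows "2 * degree s \<le> degree h + 1"
proof -
  have "2 * degree s = degree (s\<^sup>2)"
    by (cases "s = 0") (simp_all add: degree_power_eq)
  also have "\<dots> \<le> degree (smult c \<rho>)"
    unfolding assms[symmetric] by (rule map_poly_degree_leq)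
  also have "\<dots> \<le> degree \<rho>" by simp
  finally show ?thesis using degree_rho_le by linarith
qed

lemma good_decomp_iff_maximal:
  "good_decomp v h q \<rho> \<longleftrightarrow> (\<forall>q' \<rho>'. part_square_decomp h q' \<rho>' \<longrightarrow> gauss_val v \<rho>' \<le> gauss_val v \<rho>)"
  using decomp tval_less unfolding good_decomp_def tval_less_tval_iff[OF h_nonzero]
  by (auto simp: not_less not_le)

lemma scaling_square_root:
  assumes "v \<gamma> = gauss_val v \<rho>"
  obtains \<beta> where "\<beta> * \<beta> = \<gamma>" "0 < gauss_val v (smult 2 (smult (inverse \<beta>) q))"
proof -
  obtain \<beta> where "\<beta> * \<beta> = \<gamma>" using square_root_exists by blast
  then show ?thesis
    using gauss_val_double_scaled_pos[OF h_eq h_nonzero tval_less] assms that by simp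
qed

lemma reduction_differs_by_square:
  assumes decomp': "part_square_decomp h q' \<rho>'" and le: "gauss_val v \<rho> \<le> gauss_val v \<rho>'"
    and \<gamma>: "v \<gamma> = gauss_val v \<rho>"
  shows "\<exists>X. map_poly red (smult (inverse \<gamma>) \<rho>) = map_poly red (smult (inverse \<gamma>) \<rho>') + X\<^sup>2"
proof -
  obtain \<beta> where \<beta>: "\<beta> * \<beta> = \<gamma>" and Q: "0 < gauss_val v (smult 2 (smult (inverse \<beta>) q))"
    using scaling_square_root \<gamma> .
  have "\<gamma> \<noteq> 0" using \<gamma> rho_nonzero by (metis gauss_val_eq_infinity_iff v_zero)
  have "smult (inverse \<gamma>) (q\<^sup>2 + \<rho>) = smult (inverse \<gamma>) (q'\<^sup>2 + \<rho>')"
    using h_eq decomp' unfolding part_square_decomp_def by simp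
  then have "(smult (inverse \<beta>) q)\<^sup>2 + smult (inverse \<gamma>) \<rho> = (smult (inverse \<beta>) q')\<^sup>2 + smult (inverse \<gamma>) \<rho>'"
    by (simp only: smult_add_right smult_inverse_square[OF \<beta>])
  moreover have "0 \<le> gauss_val v (smult (inverse \<gamma>) \<rho>)"
    using gauss_val_normalize[OF rho_nonzero \<gamma>] by simp
  moreover have "0 \<le> gauss_val v (smult (inverse \<gamma>) \<rho>')"
    using gauss_val_smult_inverse_nonneg \<open>\<gamma> \<noteq> 0\<close> \<gamma> le by simp
  ultimately show ?thesis using reduction_square_completion Q by blast
qed

lemma square_reduction_imp_better_decomp:
  assumes "normalized_reduction v red \<rho> r" "is_square_poly r"
  shows "\<exists>q' \<rho>'. part_square_decomp h q' \<rho>' \<and> gauss_val v \<rho> < gauss_val v \<rho>'"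
proof -
  obtain \<gamma> where "\<gamma> \<noteq> 0" and \<gamma>: "v \<gamma> = gauss_val v \<rho>" and r: "r = map_poly red (smult (inverse \<gamma>) \<rho>)"
    using assms(1) unfolding normalized_reduction_def by blast
  obtain s where s: "r = s\<^sup>2" using assms(2) unfolding is_square_poly_def by blast
  obtain \<beta> where \<beta>: "\<beta> * \<beta> = \<gamma>" and Q: "0 < gauss_val v (smult 2 (smult (inverse \<beta>) q))"
    using scaling_square_root \<gamma> .
  define Q P where "Q = smult (inverse \<beta>) q" and "P = smult (inverse \<gamma>) \<rho>"
  have "gauss_val v P = 0" using gauss_val_normalize[OF rho_nonzero \<gamma>] by (simp add: P_def)
  then obtain S where "degree S \<le> degree s" and E: "0 < gauss_val v (Q\<^sup>2 + P - (Q + S)\<^sup>2)"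
    using square_reduction_improvable[of P Q s] Q r s by (auto simp: Q_def P_def)
  define q' where "q' = q + smult \<beta> S"
  have "\<beta> \<noteq> 0" using \<beta> \<open>\<gamma> \<noteq> 0\<close> by auto
  have "smult (inverse \<gamma>) (h - q'\<^sup>2) = Q\<^sup>2 + P - (Q + S)\<^sup>2"
    using \<open>\<beta> \<noteq> 0\<close> h_eq
    by (simp add: smult_diff_right smult_add_right smult_inverse_square[OF \<beta>] q'_def Q_def P_def)
  then have "h - q'\<^sup>2 = smult \<gamma> (Q\<^sup>2 + P - (Q + S)\<^sup>2)"
    using \<open>\<gamma> \<noteq> 0\<close> by (metis smult_smult right_inverse smult_1_left)
  moreover obtain e where "v \<gamma> = ereal e" using v_finite \<open>\<gamma> \<noteq> 0\<close> by blast
  ultimately have better: "gauss_val v \<rho> < gauss_val v (h - q'\<^sup>2)"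
    using ereal_less_add_pos[OF E] \<gamma> by (simp add: gauss_val_smult)
  have "2 * degree s \<le> degree h + 1" using degree_square_root_le r s by simp
  then have "degree S \<le> (degree h + 1) div 2" using \<open>degree S \<le> degree s\<close> by linarith
  then have "degree q' \<le> (degree h + 1) div 2"
    using decomp degree_add_le_max[of q "smult \<beta> S"] unfolding part_square_decomp_def q'_def
    by (auto simp: \<open>\<beta> \<noteq> 0\<close>)
  then have "part_square_decomp h q' (h - q'\<^sup>2)" unfolding part_square_decomp_def by simp
  then show ?thesis using better by blast
qed

lemma good_iff_reduction_not_square:
  assumes r: "normalized_reduction v red \<rho> r"
  shows "good_decomp v h q \<rho> \<longleftrightarrow> \<not> is_square_poly r"
proof
  assume "good_decomp v h q \<rho>"
  then show "\<not> is_square_poly r"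
    using square_reduction_imp_better_decomp[OF r] good_decomp_iff_maximal by (meson not_le)
next
  assume not_square: "\<not> is_square_poly r"
  obtain \<gamma> where "\<gamma> \<noteq> 0" and \<gamma>: "v \<gamma> = gauss_val v \<rho>" and r: "r = map_poly red (smult (inverse \<gamma>) \<rho>)"
    using r unfolding normalized_reduction_def by blast
  show "good_decomp v h q \<rho>"
    unfolding good_decomp_iff_maximal
  proof (intro allI impI)
    fix q' \<rho>' assume decomp': "part_square_decomp h q' \<rho>'"
    show "gauss_val v \<rho>' \<le> gauss_val v \<rho>"
    proof (rule ccontr)
      assume "\<not> gauss_val v \<rho>' \<le> gauss_val v \<rho>"
      then have lt: "gauss_val v \<rho> < gauss_val v \<rho>'" by simp
      then obtain X where "r = map_poly red (smult (inverse \<gamma>) \<rho>') + X\<^sup>2"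
        using reduction_differs_by_square[OF decomp' less_imp_le[OF lt] \<gamma>] r by auto
      moreover have "map_poly red (smult (inverse \<gamma>) \<rho>') = 0"
        using gauss_val_smult_inverse_pos[OF \<open>\<gamma> \<noteq> 0\<close>, of \<rho>'] \<gamma> lt
        by (simp add: map_poly_red_eq_0_iff less_imp_le)
      ultimately show False using not_square unfolding is_square_poly_def by auto
    qed
  qed
qed

lemma good_decomps_same_gauss_val:
  assumes good: "good_decomp v h q \<rho>" and good': "good_decomp v h q' \<rho>'"
  shows "gauss_val v \<rho>' = gauss_val v \<rho>"
proof -
  have decomp': "part_square_decomp h q' \<rho>'" using good' unfolding good_decomp_def by blast
  then have le: "gauss_val v \<rho>' \<le> gauss_val v \<rho>" using good good_decomp_iff_maximal by blast
  then have "tval v h \<rho>' < 2 * v 2"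
    using tval_less tval_less_tval_iff[OF h_nonzero] by (meson not_le order.strict_trans1)
  then have "\<not> tval v h \<rho>' < tval v h \<rho>" using good' decomp unfolding good_decomp_def by auto
  then show ?thesis using le tval_less_tval_iff[OF h_nonzero] by simp
qed

lemma good_decomps_reductions_agree:
  assumes good: "good_decomp v h q \<rho>" and good': "good_decomp v h q' \<rho>'"
    and r: "normalized_reduction v red \<rho> r" and r': "normalized_reduction v red \<rho>' r'"
  shows "odd_degrees r = odd_degrees r' \<and> (\<exists>c. c \<noteq> 0 \<and> pderiv r = smult c (pderiv r'))"
proof -
  have same: "gauss_val v \<rho>' = gauss_val v \<rho>" using good_decomps_same_gauss_val good good' .
  have decomp': "part_square_decomp h q' \<rho>'" using good' unfolding good_decomp_def by blast
  obtain \<gamma> where "\<gamma> \<noteq> 0" and \<gamma>: "v \<gamma> = gauss_val v \<rho>" and r_def: "r = map_poly red (smult (inverse \<gamma>) \<rho>)"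
    using r unfolding normalized_reduction_def by blast
  define A where "A = map_poly red (smult (inverse \<gamma>) \<rho>')"
  obtain X where rA: "r = A + X\<^sup>2"
    using reduction_differs_by_square[OF decomp' _ \<gamma>] same r_def by (auto simp: A_def)
  have "\<rho>' \<noteq> 0" using same rho_nonzero by (metis gauss_val_eq_infinity_iff)
  then have "normalized_reduction v red \<rho>' A"
    unfolding normalized_reduction_def A_def using \<open>\<gamma> \<noteq> 0\<close> \<gamma> same by auto
  then obtain c where "c \<noteq> 0" and r'A: "r' = smult c A"
    using normalized_reduction_unique_up_to_unit r' by blast
  have "odd_degrees r = odd_degrees r'"
    using rA r'A \<open>c \<noteq> 0\<close> by (simp add: odd_degrees_add_square_char_2[OF residue_char_2] odd_degrees_smult)
  moreover have "pderiv r = smult (inverse c) (pderiv r')"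
    using rA r'A \<open>c \<noteq> 0\<close> by (simp add: pderiv_add_square_char_2[OF residue_char_2] pderiv_smult)
  moreover have "inverse c \<noteq> 0" using \<open>c \<noteq> 0\<close> by simp
  ultimately show ?thesis by blast
qed

end

theorem proposition3p13:
  fixes K :: "'a::field_char_0 set" and v :: "'a \<Rightarrow> ereal" and red :: "'a \<Rightarrow> 'k::field"
    and h q \<rho> :: "'a poly"
  assumes "setting K v red"
    and "h \<noteq> 0"
    and "part_square_decomp h q \<rho>"
    and "tval v h \<rho> < 2 * v 2"
  shows "(good_decomp v h q \<rho> \<longleftrightarrow>
            (\<exists>r. normalized_reduction v red \<rho> r \<and> \<not> is_square_poly r))
       \<and> (good_decomp v h q \<rho> \<longleftrightarrow>
            (\<forall>r. normalized_reduction v red \<rho> r \<longrightarrow> \<not> is_square_poly r))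
       \<and> (\<forall>q' \<rho>' r r'. good_decomp v h q \<rho> \<longrightarrow> good_decomp v h q' \<rho>' \<longrightarrow>
            normalized_reduction v red \<rho> r \<longrightarrow> normalized_reduction v red \<rho>' r' \<longrightarrow>
            odd_degrees r = odd_degrees r' \<and>
            (\<exists>c. c \<noteq> 0 \<and> pderiv r = smult c (pderiv r')))"
proof -
  have "alg_closed_type TYPE('a)" "(2::'k) = 0" "is_valuation v" "is_reduction v red"
    using assms(1) unfolding setting_def by auto
  then interpret part_square_decomposition v red h q \<rho>
    using assms(2-4) by unfold_locales (simp_all add: alg_closed_type_sqrt)
  obtain r0 where "normalized_reduction v red \<rho> r0"
    using normalized_reduction_exists rho_nonzero by blast
  then show ?thesis
    using good_iff_reduction_not_square good_decomps_reductions_agree by blast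
qed

end
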